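(* Fix a real number $\sigma$. There exist constants $C>0$ and $V_0>0$, depending only on $\sigma$, such that for every integer $r\ge1$ and every real $v$ with $|v|\ge V_0$, writing $s=\sigma+iv$, $$\left|\binom{r+s-1}{r}\right|\le C\,\frac{(r+|v|)^{\sigma-1/2}\,e^{|\sigma+iv|}}{r^{1/2}\,|v|^{\sigma-1/2}}\exp\left(\frac{\pi}{2}|v|\right).$$
   Context: For complex $s$ and integer $r\ge0$, $\binom{r+s-1}{r}=\frac{s(s+1)\cdots(s+r-1)}{r!}=\frac{\Gamma(r+s)}{r!\,\Gamma(s)}$. *)

theory Defs
  imports "HOL-Analysis.Analysis"
begin

end

theory Submission
  imports Defs
begin

(* The binomial coefficient is the product of the factors |s + k| / (k + 1), k < r.
   Take N about |sigma| + |v| + 2. The first N factors are at most (N + k) / (k + 1),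
   whose product is a binomial coefficient bounded by 4^N. For k >= N one has
   |s + k| <= (k + sigma) exp (v^2 / (2 (k + sigma)^2)): the ratios (k + sigma) / (k + 1)
   compare with harmonic sums and give r^(sigma - 1) up to a power of N, and the
   exponential corrections add up to at most |v| / 2. Since ln 4 + 1/2 < 1 + pi/2, the
   factor 4^N e^(|v|/2) and all powers of N and |v| are absorbed by
   e^|v| e^(pi |v| / 2) <= e^|s| e^(pi |v| / 2). *)

lemma norm_gchoose_eq_prod:
  fixes s :: "'a::real_normed_field"
  shows "norm ((of_nat r + s - 1) gchoose r) = (\<Prod>k<r. norm (s + of_nat k) / real (Suc k))"
proof -
  have "(of_nat r + s - 1) gchoose r = pochhammer s r / fact r"
    by (simp add: gbinomial_pochhammer')
  also have "\<dots> = (\<Prod>k<r. s + of_nat k) / (\<Prod>k<r. of_nat (Suc k))"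
    by (simp add: pochhammer_prod fact_prod_Suc atLeast0LessThan)
  finally have "norm ((of_nat r + s - 1) gchoose r)
      = (\<Prod>k<r. norm (s + of_nat k)) / (\<Prod>k<r. norm (of_nat (Suc k) :: 'a))"
    by (simp add: norm_divide prod_norm)
  then show ?thesis
    by (simp add: prod_dividef del: of_nat_Suc)
qed

lemma prod_div_Suc_le_four_pow:
  fixes x :: "nat \<Rightarrow> real"
  assumes "m \<le> N" "N \<ge> 1" and x: "\<And>k. k < m \<Longrightarrow> 0 \<le> x k \<and> x k \<le> real N + real k"
  shows "(\<Prod>k<m. x k / real (Suc k)) \<le> 4 ^ N"
proof -
  have "(\<Prod>k<m. x k / real (Suc k)) \<le> (\<Prod>k<m. (real N + real k) / real (Suc k))"
    using x by (intro prod_mono) (auto intro: divide_right_mono)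
  also have "\<dots> = real (N + m - 1) gchoose m"
    using \<open>N \<ge> 1\<close>
    by (simp add: gbinomial_pochhammer' pochhammer_prod fact_prod_Suc atLeast0LessThan
        prod_dividef of_nat_diff)
  also have "\<dots> = real ((N + m - 1) choose m)"
    by (simp add: binomial_gbinomial)
  also have "\<dots> \<le> 2 ^ (N + m - 1)"
    using binomial_le_pow2 by (metis of_nat_le_iff of_nat_numeral of_nat_power)
  also have "\<dots> \<le> 2 ^ (2 * N)"
    using assms by (intro power_increasing) auto
  finally show ?thesis
    by (simp add: power_mult)
qed

lemma sqrt_sum_squares_le_mult_exp:
  fixes x y :: real
  assumes "x > 0"
  shows "sqrt (x\<^sup>2 + y\<^sup>2) \<le> x * exp (y\<^sup>2 / (2 * x\<^sup>2))"
proof -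
  have "x\<^sup>2 + y\<^sup>2 = x\<^sup>2 * (1 + y\<^sup>2 / x\<^sup>2)"
    using assms by (simp add: field_simps)
  also have "\<dots> \<le> x\<^sup>2 * exp (y\<^sup>2 / x\<^sup>2)"
    by (intro mult_left_mono exp_ge_add_one_self) auto
  also have "\<dots> = (x * exp (y\<^sup>2 / (2 * x\<^sup>2)))\<^sup>2"
    by (simp add: power_mult_distrib exp_double[symmetric] power2_eq_square[of "exp _"] flip: exp_add)
  finally show ?thesis
    using assms by (intro real_le_lsqrt) auto
qed

lemma sum_inverse_square_shift_le:
  fixes c :: real
  assumes "real N + c > 1" "N \<le> r"
  shows "(\<Sum>k=N..<r. 1 / (real k + c)\<^sup>2) \<le> 1 / (real N + c - 1)"
proof -
  define f where "f k = - 1 / (real k + c - 1)" for k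
  have "(\<Sum>k=N..<r. 1 / (real k + c)\<^sup>2) \<le> (\<Sum>k=N..<r. f (Suc k) - f k)"
  proof (intro sum_mono)
    fix k assume "k \<in> {N..<r}"
    then have k: "real k + c - 1 > 0" using assms by auto
    have "1 / (real k + c)\<^sup>2 \<le> 1 / ((real k + c - 1) * (real k + c))"
      using k by (intro divide_left_mono) (auto simp: power2_eq_square)
    also have "\<dots> = f (Suc k) - f k"
      using k unfolding f_def by (simp add: field_simps)
    finally show "1 / (real k + c)\<^sup>2 \<le> f (Suc k) - f k" .
  qed
  also have "\<dots> = f r - f N"
    using assms(2) by (rule sum_Suc_diff')
  also have "\<dots> \<le> 1 / (real N + c - 1)"
    using assms unfolding f_def by auto
  finally show ?thesis .
qed

lemma inverse_Suc_le_ln_diff: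
  assumes "k \<ge> 1"
  shows "1 / real (Suc k) \<le> ln (real (Suc k)) - ln (real k)"
proof -
  have "ln (real k / real (Suc k)) \<le> real k / real (Suc k) - 1"
    using assms by (intro ln_le_minus_one) auto
  also have "\<dots> = - 1 / real (Suc k)"
    by (simp add: field_simps)
  finally show ?thesis
    using assms by (simp add: ln_div)
qed

lemma ln_diff_le_inverse_Suc: "ln (real (Suc (Suc k))) - ln (real (Suc k)) \<le> 1 / real (Suc k)"
proof -
  have "ln (real (Suc (Suc k)) / real (Suc k)) \<le> real (Suc (Suc k)) / real (Suc k) - 1"
    by (intro ln_le_minus_one) auto
  also have "\<dots> = 1 / real (Suc k)"
    by (simp add: field_simps)
  finally show ?thesis
    by (simp add: ln_div del: of_nat_Suc)
qed

lemma sum_inverse_Suc_le_ln_ratio: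
  assumes "1 \<le> N" "N \<le> r"
  shows "(\<Sum>k=N..<r. 1 / real (Suc k)) \<le> ln (real r) - ln (real N)"
proof -
  have "(\<Sum>k=N..<r. 1 / real (Suc k)) \<le> (\<Sum>k=N..<r. ln (real (Suc k)) - ln (real k))"
    using assms by (intro sum_mono inverse_Suc_le_ln_diff) auto
  also have "\<dots> = ln (real r) - ln (real N)"
    using sum_Suc_diff'[OF assms(2), of "\<lambda>k. ln (real k)"] by simp
  finally show ?thesis .
qed

lemma ln_ratio_le_sum_inverse_Suc:
  assumes "N \<le> r"
  shows "ln (real (Suc r)) - ln (real (Suc N)) \<le> (\<Sum>k=N..<r. 1 / real (Suc k))"
proof -
  have "ln (real (Suc r)) - ln (real (Suc N)) = (\<Sum>k=N..<r. ln (real (Suc (Suc k))) - ln (real (Suc k)))"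
    using sum_Suc_diff'[OF assms, of "\<lambda>k. ln (real (Suc k))"] by simp
  also have "\<dots> \<le> (\<Sum>k=N..<r. 1 / real (Suc k))"
    by (intro sum_mono ln_diff_le_inverse_Suc)
  finally show ?thesis .
qed

lemma prod_shift_ratio_le_powr:
  fixes c :: real
  assumes "1 \<le> N" "N \<le> r" "real N + c > 0"
  shows "(\<Prod>k=N..<r. (real k + c) / real (Suc k)) \<le> real r powr (c - 1) * real (Suc N) powr \<bar>c - 1\<bar>"
proof -
  define H where "H = (\<Sum>k=N..<r. 1 / real (Suc k))"
  have "(\<Prod>k=N..<r. (real k + c) / real (Suc k)) \<le> (\<Prod>k=N..<r. exp ((c - 1) * (1 / real (Suc k))))"
  proof (intro prod_mono conjI)
    fix k assume "k \<in> {N..<r}"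
    then show "0 \<le> (real k + c) / real (Suc k)"
      using assms by auto
    have "(real k + c) / real (Suc k) = 1 + (c - 1) * (1 / real (Suc k))"
      by (simp add: field_simps)
    then show "(real k + c) / real (Suc k) \<le> exp ((c - 1) * (1 / real (Suc k)))"
      by (metis exp_ge_add_one_self)
  qed
  also have "\<dots> = exp ((c - 1) * H)"
    by (simp add: H_def exp_sum sum_distrib_left)
  also have "\<dots> \<le> real r powr (c - 1) * real (Suc N) powr \<bar>c - 1\<bar>"
  proof (cases "c \<ge> 1")
    case True
    have "(c - 1) * H \<le> (c - 1) * ln (real r)"
    proof (intro mult_left_mono)
      have "0 \<le> ln (real N)"
        using assms by simp
      then show "H \<le> ln (real r)"
        using sum_inverse_Suc_le_ln_ratio[OF assms(1,2)] by (simp add: H_def)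
    qed (use True in simp)
    then have "exp ((c - 1) * H) \<le> real r powr (c - 1)"
      using assms by (simp add: powr_def mult.commute)
    also have "\<dots> \<le> real r powr (c - 1) * real (Suc N) powr \<bar>c - 1\<bar>"
      by (intro mult_le_cancel_left1[THEN iffD2] impI) (auto simp: ge_one_powr_ge_zero)
    finally show ?thesis .
  next
    case False
    have "(c - 1) * H \<le> (c - 1) * (ln (real (Suc r)) - ln (real (Suc N)))"
      using False ln_ratio_le_sum_inverse_Suc[OF assms(2)]
      by (intro mult_left_mono_neg) (auto simp: H_def)
    also have "\<dots> = (c - 1) * ln (real (Suc r)) + \<bar>c - 1\<bar> * ln (real (Suc N))"
      using False by (simp add: algebra_simps)
    finally have "exp ((c - 1) * H)
        \<le> exp ((c - 1) * ln (real (Suc r)) + \<bar>c - 1\<bar> * ln (real (Suc N)))"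
      by simp
    also have "\<dots> = real (Suc r) powr (c - 1) * real (Suc N) powr \<bar>c - 1\<bar>"
      by (simp add: powr_def exp_add mult.commute del: of_nat_Suc)
    also have "\<dots> \<le> real r powr (c - 1) * real (Suc N) powr \<bar>c - 1\<bar>"
      using False assms by (intro mult_right_mono powr_mono2') auto
    finally show ?thesis .
  qed
  finally show ?thesis .
qed

lemma prod_norm_tail_le:
  fixes s :: complex
  assumes "1 \<le> N" "N \<le> r" "\<bar>Im s\<bar> + 2 \<le> real N + Re s"
  shows "(\<Prod>k=N..<r. norm (s + of_nat k) / real (Suc k))
    \<le> real r powr (Re s - 1) * real (Suc N) powr \<bar>Re s - 1\<bar> * exp (\<bar>Im s\<bar> / 2)"
proof -
  define \<sigma> V where "\<sigma> = Re s" and "V = \<bar>Im s\<bar>"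
  have pos: "real k + \<sigma> > 0" if "N \<le> k" for k
    using that assms unfolding \<sigma>_def by linarith
  have "(\<Prod>k=N..<r. norm (s + of_nat k) / real (Suc k))
      \<le> (\<Prod>k=N..<r. (real k + \<sigma>) / real (Suc k) * exp (V\<^sup>2 / (2 * (real k + \<sigma>)\<^sup>2)))"
  proof (intro prod_mono conjI)
    fix k assume k: "k \<in> {N..<r}"
    have "norm (s + of_nat k) = sqrt ((real k + \<sigma>)\<^sup>2 + V\<^sup>2)"
      by (simp add: \<sigma>_def V_def cmod_def add.commute)
    also have "\<dots> \<le> (real k + \<sigma>) * exp (V\<^sup>2 / (2 * (real k + \<sigma>)\<^sup>2))"
      using pos k by (intro sqrt_sum_squares_le_mult_exp) auto
    finally show "norm (s + of_nat k) / real (Suc k)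
        \<le> (real k + \<sigma>) / real (Suc k) * exp (V\<^sup>2 / (2 * (real k + \<sigma>)\<^sup>2))"
      by (simp add: divide_right_mono field_simps del: of_nat_Suc)
  qed simp
  also have "\<dots> = (\<Prod>k=N..<r. (real k + \<sigma>) / real (Suc k))
      * exp (\<Sum>k=N..<r. V\<^sup>2 / (2 * (real k + \<sigma>)\<^sup>2))"
    by (simp only: prod.distrib exp_sum[OF finite_atLeastLessThan])
  also have "\<dots> \<le> real r powr (\<sigma> - 1) * real (Suc N) powr \<bar>\<sigma> - 1\<bar> * exp (V / 2)"
  proof (intro mult_mono)
    have "(\<Sum>k=N..<r. V\<^sup>2 / (2 * (real k + \<sigma>)\<^sup>2))
        = V\<^sup>2 / 2 * (\<Sum>k=N..<r. 1 / (real k + \<sigma>)\<^sup>2)"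
      by (simp add: sum_distrib_left)
    also have "V\<^sup>2 / 2 * (\<Sum>k=N..<r. 1 / (real k + \<sigma>)\<^sup>2) \<le> V\<^sup>2 / 2 * (1 / (real N + \<sigma> - 1))"
      using assms by (intro mult_left_mono sum_inverse_square_shift_le) (auto simp: \<sigma>_def)
    also have "\<dots> = V / 2 * (V / (real N + \<sigma> - 1))"
      by (simp add: power2_eq_square)
    also have "\<dots> \<le> V / 2"
      using assms by (intro mult_left_le) (auto simp: \<sigma>_def V_def)
    finally show "exp (\<Sum>k=N..<r. V\<^sup>2 / (2 * (real k + \<sigma>)\<^sup>2)) \<le> exp (V / 2)"
      by simp
    show "(\<Prod>k=N..<r. (real k + \<sigma>) / real (Suc k)) \<le> real r powr (\<sigma> - 1) * real (Suc N) powr \<bar>\<sigma> - 1\<bar>"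
      using assms pos[of N] by (intro prod_shift_ratio_le_powr) auto
  qed (use pos in \<open>auto intro: prod_nonneg\<close>)
  finally show ?thesis
    by (simp add: \<sigma>_def V_def)
qed

lemma one_le_powr_mult_powr_abs:
  fixes x y c :: real
  assumes "1 \<le> x" "x \<le> y"
  shows "1 \<le> x powr c * y powr \<bar>c\<bar>"
proof (cases "c \<ge> 0")
  case True
  then have "1 \<le> x powr c" "1 \<le> y powr \<bar>c\<bar>"
    using assms by (auto simp: ge_one_powr_ge_zero)
  then show ?thesis
    using mult_mono[of 1 "x powr c" 1 "y powr \<bar>c\<bar>"] by simp
next
  case False
  have "1 = y powr c * y powr \<bar>c\<bar>"
    using False assms by (simp add: powr_add[symmetric])
  also have "\<dots> \<le> x powr c * y powr \<bar>c\<bar>"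
    using False assms by (intro mult_right_mono powr_mono2') auto
  finally show ?thesis .
qed

lemma norm_gchoose_le:
  fixes s :: complex
  assumes "r \<ge> 1" "\<bar>Re s\<bar> + \<bar>Im s\<bar> + 2 \<le> real N"
  shows "norm ((of_nat r + s - 1) gchoose r)
    \<le> 4 ^ N * exp (\<bar>Im s\<bar> / 2) * real r powr (Re s - 1) * real (Suc N) powr \<bar>Re s - 1\<bar>"
proof -
  define f where "f k = norm (s + of_nat k) / real (Suc k)" for k
  have N: "N \<ge> 1"
    using assms by linarith
  have head: "(\<Prod>k<m. f k) \<le> 4 ^ N" if "m \<le> N" for m
  proof -
    have "norm (s + of_nat k) \<le> real N + real k" for k
      using norm_triangle_ineq[of s "of_nat k"] cmod_le[of s] assms by simp
    then show ?thesis
      unfolding f_def using that N by (intro prod_div_Suc_le_four_pow) auto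
  qed
  have "(\<Prod>k<r. f k) \<le> 4 ^ N * (real r powr (Re s - 1) * real (Suc N) powr \<bar>Re s - 1\<bar> * exp (\<bar>Im s\<bar> / 2))"
  proof (cases "r \<le> N")
    case True
    have "1 \<le> real r powr (Re s - 1) * real (Suc N) powr \<bar>Re s - 1\<bar>"
      using True assms by (intro one_le_powr_mult_powr_abs) auto
    then have "1 \<le> real r powr (Re s - 1) * real (Suc N) powr \<bar>Re s - 1\<bar> * exp (\<bar>Im s\<bar> / 2)"
      using mult_mono[of 1 _ 1 "exp (\<bar>Im s\<bar> / 2)"] by simp
    with head[OF True] show ?thesis
      by (metis mult.right_neutral mult_left_mono order.trans zero_le_numeral zero_le_power)
  next
    case False
    have "(\<Prod>k<r. f k) = (\<Prod>k<N. f k) * (\<Prod>k=N..<r. f k)"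
      using False prod.atLeastLessThan_concat[of 0 N r f] by (simp add: atLeast0LessThan)
    also have "\<dots> \<le> 4 ^ N * (real r powr (Re s - 1) * real (Suc N) powr \<bar>Re s - 1\<bar> * exp (\<bar>Im s\<bar> / 2))"
    proof (rule mult_mono)
      show "(\<Prod>k<N. f k) \<le> 4 ^ N"
        by (rule head) simp
      show "(\<Prod>k=N..<r. f k) \<le> real r powr (Re s - 1) * real (Suc N) powr \<bar>Re s - 1\<bar> * exp (\<bar>Im s\<bar> / 2)"
        unfolding f_def using False N assms by (intro prod_norm_tail_le) auto
    qed (auto simp: f_def intro: prod_nonneg)
    finally show ?thesis .
  qed
  then show ?thesis
    by (simp add: norm_gchoose_eq_prod f_def mult_ac)
qed

lemma powr_le_powr_mult_exp:
  fixes x a D :: real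
  assumes "x > 0" "a > 0" "D \<ge> 0"
  shows "x powr D \<le> a powr D * exp (D * x / a)"
proof -
  have "ln (x / a) \<le> x / a - 1"
    using assms by (intro ln_le_minus_one) auto
  then have "ln x \<le> ln a + x / a"
    using assms by (simp add: ln_div)
  then have "D * ln x \<le> D * ln a + D * x / a"
    using assms by (metis distrib_left mult_left_mono times_divide_eq_right)
  then show ?thesis
    using assms by (simp add: powr_def mult.commute flip: exp_add)
qed

lemma four_pow_mult_powr_le_exp:
  fixes V T D :: real
  assumes "V \<ge> 0" "T \<ge> 0" "D \<ge> 0" "real N \<le> V + T"
  shows "4 ^ N * exp (V / 2) * real (Suc N) powr D
    \<le> 4 powr T * (8 * D + 8) powr D * exp ((T + 1) / 8) * exp ((1 + pi / 2) * V)"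
proof -
  have "(4::real) ^ N = 4 powr real N"
    by (simp add: powr_realpow)
  also have "\<dots> \<le> 4 powr (V + T)"
    using assms by (intro powr_mono) auto
  also have "\<dots> = 4 powr T * exp (ln 4 * V)"
    by (simp add: powr_def algebra_simps exp_add)
  finally have four: "(4::real) ^ N \<le> 4 powr T * exp (ln 4 * V)" .
  have "real (Suc N) powr D \<le> (V + T + 1) powr D"
    using assms by (intro powr_mono2) auto
  also have "\<dots> \<le> (8 * D + 8) powr D * exp (D * (V + T + 1) / (8 * D + 8))"
    using assms by (intro powr_le_powr_mult_exp) auto
  also have "\<dots> \<le> (8 * D + 8) powr D * exp ((V + T + 1) / 8)"
    using assms by (intro mult_left_mono) (auto simp: field_simps)
  finally have poly: "real (Suc N) powr D \<le> (8 * D + 8) powr D * exp ((V + T + 1) / 8)" .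
  have "ln (4::real) = 2 * ln 2"
    using ln_realpow[of 2 2] by simp
  then have rate: "ln 4 + 5 / 8 \<le> 1 + pi / 2"
    using ln2_le_25_over_36 pi_gt3 by linarith
  have "4 ^ N * exp (V / 2) * real (Suc N) powr D
      \<le> (4 powr T * exp (ln 4 * V)) * exp (V / 2) * ((8 * D + 8) powr D * exp ((V + T + 1) / 8))"
    using four poly by (intro mult_mono) auto
  also have "\<dots> = 4 powr T * (8 * D + 8) powr D * exp ((T + 1) / 8) * exp ((ln 4 + 5 / 8) * V)"
    by (simp add: field_simps flip: exp_add)
  also have "\<dots> \<le> 4 powr T * (8 * D + 8) powr D * exp ((T + 1) / 8) * exp ((1 + pi / 2) * V)"
    using rate assms by (intro mult_left_mono) (auto intro: mult_right_mono)
  finally show ?thesis .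
qed

lemma powr_le_powr_ratio:
  fixes x V a :: real
  assumes "1 \<le> x" "1 \<le> V"
  shows "x powr (a - 1/2) \<le> (1 + V) powr (2 * \<bar>a\<bar>) * ((x + V) powr a / (sqrt x * V powr a))"
proof -
  have "(1 + V) powr (2 * \<bar>a\<bar>) * ((x + V) powr a / (sqrt x * V powr a))
      = x powr (a - 1/2) * (((x + V) / x) powr a * (1 + V) powr \<bar>a\<bar>)
          * (V powr (- a) * (1 + V) powr \<bar>a\<bar>)"
    using assms by (simp add: powr_divide powr_minus powr_diff powr_half_sqrt[symmetric]
        powr_add[symmetric] field_simps)
  also have "\<dots> \<ge> x powr (a - 1/2) * 1 * 1"
  proof (intro mult_mono)
    show "1 \<le> ((x + V) / x) powr a * (1 + V) powr \<bar>a\<bar>"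
      using assms by (intro one_le_powr_mult_powr_abs) (auto simp: field_simps)
    show "1 \<le> V powr (- a) * (1 + V) powr \<bar>a\<bar>"
      using one_le_powr_mult_powr_abs[of V "1 + V" "- a"] assms by simp
  qed auto
  finally show ?thesis
    by simp
qed

lemma norm_gchoose_Complex_le:
  fixes \<sigma> v :: real
  defines "T \<equiv> \<bar>\<sigma>\<bar> + 3" and "D \<equiv> \<bar>\<sigma> - 1\<bar> + 2 * \<bar>\<sigma> - 1/2\<bar>"
  assumes "r \<ge> 1" "\<bar>v\<bar> \<ge> 1"
  shows "norm ((of_nat r + Complex \<sigma> v - 1) gchoose r)
    \<le> 4 powr T * (8 * D + 8) powr D * exp ((T + 1) / 8)
        * ((real r + \<bar>v\<bar>) powr (\<sigma> - 1/2) * exp (norm (Complex \<sigma> v)))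
        / (sqrt (real r) * \<bar>v\<bar> powr (\<sigma> - 1/2)) * exp (pi / 2 * \<bar>v\<bar>)"
proof -
  define C where "C = 4 powr T * (8 * D + 8) powr D * exp ((T + 1) / 8)"
  define N where "N = nat \<lceil>\<bar>\<sigma>\<bar> + \<bar>v\<bar> + 2\<rceil>"
  define R where "R = (real r + \<bar>v\<bar>) powr (\<sigma> - 1/2) / (sqrt (real r) * \<bar>v\<bar> powr (\<sigma> - 1/2))"
  have N: "\<bar>\<sigma>\<bar> + \<bar>v\<bar> + 2 \<le> real N" "real N \<le> \<bar>v\<bar> + T"
    unfolding N_def T_def by linarith+
  have "norm ((of_nat r + Complex \<sigma> v - 1) gchoose r)
      \<le> 4 ^ N * exp (\<bar>v\<bar> / 2) * real (Suc N) powr \<bar>\<sigma> - 1\<bar> * real r powr (\<sigma> - 1)"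
    using norm_gchoose_le[of r "Complex \<sigma> v" N] assms(3,4) N by (simp add: mult_ac)
  also have "\<dots> \<le> 4 ^ N * exp (\<bar>v\<bar> / 2) * real (Suc N) powr \<bar>\<sigma> - 1\<bar>
      * ((1 + \<bar>v\<bar>) powr (2 * \<bar>\<sigma> - 1/2\<bar>) * R)"
    using powr_le_powr_ratio[of "real r" "\<bar>v\<bar>" "\<sigma> - 1/2"] assms(3,4)
    by (intro mult_left_mono) (auto simp: R_def)
  also have "\<dots> \<le> 4 ^ N * exp (\<bar>v\<bar> / 2) * real (Suc N) powr \<bar>\<sigma> - 1\<bar>
      * (real (Suc N) powr (2 * \<bar>\<sigma> - 1/2\<bar>) * R)"
    using N by (intro mult_left_mono mult_right_mono powr_mono2) (auto simp: R_def)
  also have "\<dots> = 4 ^ N * exp (\<bar>v\<bar> / 2) * real (Suc N) powr D * R"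
    by (simp add: D_def powr_add mult_ac)
  also have "\<dots> \<le> C * exp ((1 + pi / 2) * \<bar>v\<bar>) * R"
    using four_pow_mult_powr_le_exp[of "\<bar>v\<bar>" T D N] N
    by (intro mult_right_mono) (auto simp: C_def T_def D_def R_def)
  also have "\<dots> \<le> C * (exp (norm (Complex \<sigma> v)) * exp (pi / 2 * \<bar>v\<bar>)) * R"
    using abs_Im_le_cmod[of "Complex \<sigma> v"]
    by (intro mult_right_mono mult_left_mono) (auto simp: C_def R_def distrib_right simp flip: exp_add)
  finally show ?thesis
    by (simp add: C_def R_def mult_ac)
qed

theorem lemma2p2:
  fixes \<sigma> :: real
  shows "\<exists>C V0. C > 0 \<and> V0 > 0 \<and>
    (\<forall>(r::nat) (v::real). r \<ge> 1 \<longrightarrow> \<bar>v\<bar> \<ge> V0 \<longrightarrow>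
      (let s = Complex \<sigma> v in
        norm ((of_nat r + s - 1) gchoose r)
          \<le> C * ((real r + \<bar>v\<bar>) powr (\<sigma> - 1/2) * exp (norm s))
               / (sqrt (real r) * \<bar>v\<bar> powr (\<sigma> - 1/2))
               * exp (pi / 2 * \<bar>v\<bar>)))"
proof -
  define T D where "T = \<bar>\<sigma>\<bar> + 3" and "D = \<bar>\<sigma> - 1\<bar> + 2 * \<bar>\<sigma> - 1/2\<bar>"
  define C where "C = 4 powr T * (8 * D + 8) powr D * exp ((T + 1) / 8)"
  have "C > 0"
    by (simp add: C_def D_def add_nonneg_eq_0_iff)
  then show ?thesis
    using norm_gchoose_Complex_le[where \<sigma> = \<sigma>]
    by (intro exI[of _ C] exI[of _ 1]) (simp add: Let_def C_def T_def D_def)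
qed

end
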